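(* Let $\mathcal{L}=(L,\wedge,\vee,0,1)$ be a complete lattice and let $p\in L$ be strongly irreducible in $L$. Then $p$ is irreducible in $L$, and at least one of the following holds: (i) there exists $p'\in L$ with $p'<p$ and an element $q\in L$ with $q\geq p'$ such that $p$ is a pseudo-complement of $q$ in the lattice $\{x\in L\mid p'\leq x\}$ and the interval $[p',q]$ is uniform; (ii) $p$ is a waist in $L$.
   Context: For a lower semilattice $(L,\wedge)$, an element $p$ is irreducible if for all $a,b\in L$ with $p\leq a$ and $p\leq b$: $a\wedge b\leq p$ implies $a\leq p$ or $b\leq p$; it is strongly irreducible if this implication holds for all $a,b\in L$. For $a\leq b$, $[a,b]=\{x\in L\mid a\leq x\leq b\}$. A lower semilattice with least element $z$ is uniform if $z$ is irreducible in it, i.e. $x\wedge y=z$ implies $x=z$ or $y=z$. A pseudo-complement of an element $a$ in a semilattice with least element $z$ is the greatest element $x$ with $a\wedge x=z$. A waist is an element comparable to every element of $L$. *)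

theory Defs
  imports Main
begin

definition irreducible_in :: "'a::semilattice_inf set \<Rightarrow> 'a \<Rightarrow> bool" where
  "irreducible_in S p \<longleftrightarrow>
     (\<forall>a\<in>S. \<forall>b\<in>S. p \<le> a \<longrightarrow> p \<le> b \<longrightarrow> inf a b \<le> p \<longrightarrow> a \<le> p \<or> b \<le> p)"

definition strongly_irreducible_in :: "'a::semilattice_inf set \<Rightarrow> 'a \<Rightarrow> bool" where
  "strongly_irreducible_in S p \<longleftrightarrow>
     (\<forall>a\<in>S. \<forall>b\<in>S. inf a b \<le> p \<longrightarrow> a \<le> p \<or> b \<le> p)"

definition uniform_with_least :: "'a::semilattice_inf set \<Rightarrow> 'a \<Rightarrow> bool" where
  "uniform_with_least S z \<longleftrightarrow> z \<in> S \<and> (\<forall>x\<in>S. z \<le> x) \<and> irreducible_in S z"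

definition pseudo_complement_in :: "'a::semilattice_inf set \<Rightarrow> 'a \<Rightarrow> 'a \<Rightarrow> 'a \<Rightarrow> bool" where
  "pseudo_complement_in S z a x \<longleftrightarrow>
     x \<in> S \<and> inf a x = z \<and> (\<forall>y\<in>S. inf a y = z \<longrightarrow> y \<le> x)"

definition waist :: "'a::order \<Rightarrow> bool" where
  "waist p \<longleftrightarrow> (\<forall>x. x \<le> p \<or> p \<le> x)"

end

theory Submission
  imports Defs
begin

text \<open>If p is not a waist, pick x incomparable with p and put p' = p \<sqinter> x. Strong irreducibility
  of p, applied to meets lying below p' \<le> p, shows both that p is the pseudo-complement of x above p'
  and that p' is meet-irreducible in [p', x].\<close>

lemma strongly_irreducible_in_imp_irreducible_in:
  "strongly_irreducible_in S p \<Longrightarrow> irreducible_in S p"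
  unfolding strongly_irreducible_in_def irreducible_in_def by blast

lemma pseudo_complement_in_inf_of_strongly_irreducible:
  fixes p x :: "'a::semilattice_inf"
  assumes "strongly_irreducible_in UNIV p" and "\<not> x \<le> p"
  shows "pseudo_complement_in {inf p x..} (inf p x) x p"
  unfolding pseudo_complement_in_def
proof (intro conjI ballI impI)
  show "p \<in> {inf p x..}" by simp
  show "inf x p = inf p x" by (simp add: inf_commute)
next
  fix y assume "inf x y = inf p x"
  then have "inf x y \<le> p" by simp
  then show "y \<le> p"
    using assms unfolding strongly_irreducible_in_def by blast
qed

lemma uniform_with_least_inf_of_strongly_irreducible:
  fixes p x :: "'a::semilattice_inf"
  assumes "strongly_irreducible_in UNIV p"
  shows "uniform_with_least {inf p x..x} (inf p x)"
  unfolding uniform_with_least_def irreducible_in_def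
proof (intro conjI ballI impI)
  show "inf p x \<in> {inf p x..x}" by simp
next
  fix y assume "y \<in> {inf p x..x}"
  then show "inf p x \<le> y" by simp
next
  fix u v assume u: "u \<in> {inf p x..x}" and v: "v \<in> {inf p x..x}" and "inf u v \<le> inf p x"
  then have "inf u v \<le> p" by (meson inf.boundedE)
  then have "u \<le> p \<or> v \<le> p"
    using assms unfolding strongly_irreducible_in_def by blast
  then show "u \<le> inf p x \<or> v \<le> inf p x" using u v by auto
qed

theorem theorem1p16:
  fixes p :: "'a::complete_lattice"
  assumes "strongly_irreducible_in UNIV p"
  shows "irreducible_in UNIV p \<and>
    ((\<exists>p' q. p' < p \<and> p' \<le> q \<and> pseudo_complement_in {p'..} p' q p \<and>
        uniform_with_least {p'..q} p')
     \<or> waist p)"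
proof -
  have "(\<exists>p' q. p' < p \<and> p' \<le> q \<and> pseudo_complement_in {p'..} p' q p \<and>
          uniform_with_least {p'..q} p') \<or> waist p"
  proof (cases "waist p")
    case False
    then obtain x where "\<not> x \<le> p" and "\<not> p \<le> x"
      unfolding waist_def by blast
    then have "inf p x < p" "inf p x \<le> x"
      by (metis inf.absorb_iff1 inf.cobounded1 inf.cobounded2 order.not_eq_order_implies_strict)+
    with pseudo_complement_in_inf_of_strongly_irreducible[OF assms \<open>\<not> x \<le> p\<close>]
      uniform_with_least_inf_of_strongly_irreducible[OF assms]
    show ?thesis by blast
  qed simp
  then show ?thesis
    using strongly_irreducible_in_imp_irreducible_in[OF assms] by blast
qed

end
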